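(* Define $g:\{0,1\}^*\to\mathbb{T}$ by $g(\epsilon)=\bullet$, $g(0)=\mathcal{L}$, $g(1)=\mathcal{R}$ and $g(b_1\cdots b_n)=g(b_1)\bowtie\cdots\bowtie g(b_n)$ for $b_i\in\{0,1\}$ (so that $g(s\cdot 0)=g(s)\bowtie\mathcal{L}$ and $g(s\cdot 1)=g(s)\bowtie\mathcal{R}$). Then $g$ is a bijection from $\{0,1\}^*$ onto the set $\mathbb{U}$ of unary trees, and for all $x,y\in\{0,1\}^*$: $x\preceq y$ (i.e. there is $z$ with $x\cdot z=y$) iff $g(y)\sqsubseteq g(x)$.
   Context: A tree share is a finite binary tree whose leaves are labelled $\bullet$ (black) or $\circ$ (white), in canonical form: no subtree has the form $\mathrm{Node}(\bullet,\bullet)$ or $\mathrm{Node}(\circ,\circ)$ (such subtrees are identified with the leaf $\bullet$, resp. $\circ$). $\mathbb{T}$ denotes the set of tree shares. $\tau_1\sqcup\tau_2$ is computed by unfolding both trees (replacing a leaf $\ell$ by $\mathrm{Node}(\ell,\ell)$ as needed) to a common shape, taking Boolean join leafwise ($\bullet$ = true, $\circ$ = false), and refolding to canonical form. $\tau_1\sqsubseteq\tau_2$ means $\tau_1\sqcup\tau_2=\tau_2$. The product $\tau_1\bowtie\tau_2$ is obtained by replacing every $\bullet$ leaf of $\tau_1$ by a copy of $\tau_2$ and refolding to canonical form. $\mathcal{L}=\mathrm{Node}(\bullet,\circ)$ and $\mathcal{R}=\mathrm{Node}(\circ,\bullet)$. A unary tree is a tree share with exactly one black leaf; $\mathbb{U}$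 is the set of unary trees. *)

theory Defs
  imports Main
begin

text \<open>Binary trees with Boolean leaves: True = black, False = white.\<close>
datatype tree = Leaf bool | Node tree tree

fun canonical :: "tree \<Rightarrow> bool" where
  "canonical (Leaf b) = True"
| "canonical (Node l r) =
     (canonical l \<and> canonical r \<and> (\<forall>b. \<not> (l = Leaf b \<and> r = Leaf b)))"

definition TT :: "tree set" where
  "TT = {t. canonical t}"

fun mk :: "tree \<Rightarrow> tree \<Rightarrow> tree" where
  "mk (Leaf a) (Leaf b) = (if a = b then Leaf a else Node (Leaf a) (Leaf b))"
| "mk l r = Node l r"

fun norm :: "tree \<Rightarrow> tree" where
  "norm (Leaf b) = Leaf b"
| "norm (Node l r) = mk (norm l) (norm r)"

text \<open>Leafwise join after unfolding leaves to a common shape (a leaf is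
  unfolded to Node (Leaf a) (Leaf a) as needed).\<close>
fun join_raw :: "tree \<Rightarrow> tree \<Rightarrow> tree" where
  "join_raw (Leaf a) (Leaf b) = Leaf (a \<or> b)"
| "join_raw (Leaf a) (Node c d) = Node (join_raw (Leaf a) c) (join_raw (Leaf a) d)"
| "join_raw (Node a b) (Leaf c) = Node (join_raw a (Leaf c)) (join_raw b (Leaf c))"
| "join_raw (Node a b) (Node c d) = Node (join_raw a c) (join_raw b d)"

definition tjoin :: "tree \<Rightarrow> tree \<Rightarrow> tree" where
  "tjoin t1 t2 = norm (join_raw t1 t2)"

definition tle :: "tree \<Rightarrow> tree \<Rightarrow> bool" where
  "tle t1 t2 \<longleftrightarrow> tjoin t1 t2 = t2"

fun subst_black :: "tree \<Rightarrow> tree \<Rightarrow> tree" where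
  "subst_black (Leaf b) t = (if b then t else Leaf False)"
| "subst_black (Node l r) t = Node (subst_black l t) (subst_black r t)"

definition bowtie :: "tree \<Rightarrow> tree \<Rightarrow> tree" where
  "bowtie t1 t2 = norm (subst_black t1 t2)"

definition LL :: tree where "LL = Node (Leaf True) (Leaf False)"
definition RR :: tree where "RR = Node (Leaf False) (Leaf True)"

fun blacks :: "tree \<Rightarrow> nat" where
  "blacks (Leaf b) = (if b then 1 else 0)"
| "blacks (Node l r) = blacks l + blacks r"

definition UU :: "tree set" where
  "UU = {t. t \<in> TT \<and> blacks t = 1}"

text \<open>Bits: False = 0, True = 1.  g(b1...bn) = g(b1) \<bowtie> ... \<bowtie> g(bn),
  associated to the left, with g(empty) = black.\<close>
definition gbit :: "bool \<Rightarrow> tree" where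
  "gbit b = (if b then RR else LL)"

definition g :: "bool list \<Rightarrow> tree" where
  "g s = fold (\<lambda>b acc. bowtie acc (gbit b)) s (Leaf True)"

end

theory Submission
  imports Defs
begin

text \<open>A unary tree is determined by the address of its black leaf: reading a bit string
  as a path from the root (0 = left, 1 = right), g(s) is the tree whose black leaf sits at
  address s and whose siblings along the path are white, and grafting one such tree into
  the black leaf of another concatenates the addresses.  A canonical tree with exactly one
  black leaf is such a path tree, since the sibling subtree along the way has no black leaf
  and is therefore white.  For the order, joining the path trees of s and s \<cdot> z leaves the
  part along s untouched and joins the path tree of z with the black leaf, which gives
  black; conversely, if the join of two path trees equals the second one, their first bits
  must agree (otherwise the join has two non-white children), and one inducts.\<close>

fun path_tree :: "bool list \<Rightarrow> tree \<Rightarrow> tree" where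
  "path_tree [] t = t"
| "path_tree (False # s) t = Node (path_tree s t) (Leaf False)"
| "path_tree (True # s) t = Node (Leaf False) (path_tree s t)"

abbreviation unary :: "bool list \<Rightarrow> tree" where
  "unary s \<equiv> path_tree s (Leaf True)"

lemma path_tree_append: "path_tree s (path_tree z t) = path_tree (s @ z) t"
  by (induction s t rule: path_tree.induct) auto

lemma path_tree_eq_Leaf_iff [simp]: "path_tree s t = Leaf b \<longleftrightarrow> s = [] \<and> t = Leaf b"
  by (induction s t rule: path_tree.induct) auto

lemma canonical_path_tree:
  "canonical t \<Longrightarrow> t \<noteq> Leaf False \<Longrightarrow> canonical (path_tree s t)"
  by (induction s t rule: path_tree.induct) auto

lemma canonical_unary: "canonical (unary s)"
  by (rule canonical_path_tree) simp_all

lemma blacks_path_tree: "blacks (path_tree s t) = blacks t"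
  by (induction s t rule: path_tree.induct) auto

lemma subst_black_unary: "subst_black (unary s) t = path_tree s t"
  by (induction s t rule: path_tree.induct) auto

lemma mk_eq_Node: "\<not> (\<exists>b. l = Leaf b \<and> r = Leaf b) \<Longrightarrow> mk l r = Node l r"
  by (cases "(l, r)" rule: mk.cases) auto

lemma norm_canonical: "canonical t \<Longrightarrow> norm t = t"
  by (induction t) (auto simp: mk_eq_Node)

lemma mk_white_sibling:
  "t \<noteq> Leaf False \<Longrightarrow> mk t (Leaf False) = Node t (Leaf False)"
  "t \<noteq> Leaf False \<Longrightarrow> mk (Leaf False) t = Node (Leaf False) t"
  by (cases t; simp)+

lemma norm_path_tree:
  "norm t \<noteq> Leaf False \<Longrightarrow> norm (path_tree s t) = path_tree s (norm t)"
  by (induction s t rule: path_tree.induct) (auto simp: mk_white_sibling)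

lemma norm_path_tree_single_inject:
  "norm (path_tree [b] t) = path_tree [b] u \<Longrightarrow> norm t = u"
  by (cases b; cases "norm t") (auto split: if_splits)

lemma bowtie_unary: "bowtie (unary s) (unary z) = unary (s @ z)"
  unfolding bowtie_def subst_black_unary path_tree_append
  by (rule norm_canonical[OF canonical_unary])

lemma g_eq_unary: "g s = unary s"
proof (induction s rule: rev_induct)
  case Nil
  then show ?case by (simp add: g_def)
next
  case (snoc b s)
  have "gbit b = unary [b]"
    by (cases b) (simp_all add: gbit_def LL_def RR_def)
  moreover have "g (s @ [b]) = bowtie (g s) (gbit b)"
    by (simp add: g_def)
  ultimately show ?case
    using snoc by (simp add: bowtie_unary)
qed

lemma canonical_no_blacks: "canonical t \<Longrightarrow> blacks t = 0 \<Longrightarrow> t = Leaf False"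
  by (induction t) (auto split: if_splits)

lemma canonical_one_black_unary:
  "canonical t \<Longrightarrow> blacks t = 1 \<Longrightarrow> \<exists>s. t = unary s"
proof (induction t)
  case (Leaf b)
  then have "Leaf b = unary []" by (simp split: if_splits)
  then show ?case ..
next
  case (Node l r)
  show ?case
  proof (cases "blacks l = 1")
    case True
    then have "r = Leaf False"
      using Node.prems canonical_no_blacks by auto
    moreover obtain s where "l = unary s"
      using Node True by auto
    ultimately have "Node l r = unary (False # s)" by simp
    then show ?thesis ..
  next
    case False
    then have "l = Leaf False" "blacks r = 1"
      using Node.prems canonical_no_blacks by auto
    moreover obtain s where "r = unary s"
      using Node \<open>blacks r = 1\<close> by auto
    ultimately have "Node l r = unary (True # s)" by simp
    then show ?thesis ..
  qed
qed

lemma UU_eq_range_unary: "UU = range unary"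
proof
  show "UU \<subseteq> range unary"
    using canonical_one_black_unary by (auto simp: UU_def TT_def)
  show "range unary \<subseteq> UU"
    by (auto simp: UU_def TT_def blacks_path_tree intro!: canonical_unary)
qed

lemma join_raw_white_left: "join_raw (Leaf False) t = t"
  by (induction t) auto

lemma join_raw_white_right: "join_raw t (Leaf False) = t"
  by (induction t) auto

lemma norm_join_raw_black_left: "norm (join_raw (Leaf True) t) = Leaf True"
  by (induction t) auto

lemma norm_join_raw_black_right: "norm (join_raw t (Leaf True)) = Leaf True"
  by (induction t) auto

lemma join_raw_path_tree:
  "join_raw (path_tree s t) (path_tree s u) = path_tree s (join_raw t u)"
  by (induction s t rule: path_tree.induct) auto

lemma tle_unary_append: "tle (unary (x @ z)) (unary x)"
proof -
  have "join_raw (unary (x @ z)) (unary x) = path_tree x (join_raw (unary z) (Leaf True))"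
    by (simp add: join_raw_path_tree flip: path_tree_append)
  then show ?thesis
    unfolding tle_def tjoin_def by (simp add: norm_path_tree norm_join_raw_black_right)
qed

lemma path_tree_single_neq_mk:
  "l \<noteq> Leaf False \<Longrightarrow> r \<noteq> Leaf False \<Longrightarrow> path_tree [b] t \<noteq> mk l r"
  by (cases "(l, r)" rule: mk.cases; cases b) auto

lemma tle_unary_Cons:
  assumes "tle (unary y) (unary (b # s))"
  obtains y' where "y = b # y'" and "tle (unary y') (unary s)"
proof (cases y)
  case Nil
  then show ?thesis
    using assms norm_join_raw_black_left[of "unary (b # s)"]
    by (cases b) (simp_all add: tle_def tjoin_def)
next
  case (Cons c y')
  have join: "norm (join_raw (path_tree [c] (unary y')) (path_tree [b] (unary s)))
      = path_tree [b] (unary s)"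
    using assms Cons by (simp add: tle_def tjoin_def path_tree_append)
  show ?thesis
  proof (cases "b = c")
    case True
    then have "norm (path_tree [b] (join_raw (unary y') (unary s))) = path_tree [b] (unary s)"
      using join by (simp only: join_raw_path_tree)
    then have "norm (join_raw (unary y') (unary s)) = unary s"
      by (rule norm_path_tree_single_inject)
    then have "tle (unary y') (unary s)"
      by (simp add: tle_def tjoin_def)
    with Cons True that show ?thesis by simp
  next
    case False
    have "norm (join_raw (path_tree [c] (unary y')) (path_tree [b] (unary s)))
        \<in> {mk (unary y') (unary s), mk (unary s) (unary y')}"
      using False norm_canonical[OF canonical_unary]
      by (cases b; cases c) (simp_all add: join_raw_white_left join_raw_white_right)
    with join have False
      using path_tree_single_neq_mk[of "unary y'" "unary s" b]
        path_tree_single_neq_mk[of "unary s" "unary y'" b]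
      by auto
    then show ?thesis ..
  qed
qed

lemma prefix_iff_tle_unary: "(\<exists>z. x @ z = y) \<longleftrightarrow> tle (unary y) (unary x)"
proof
  show "\<exists>z. x @ z = y \<Longrightarrow> tle (unary y) (unary x)"
    using tle_unary_append by blast
  show "tle (unary y) (unary x) \<Longrightarrow> \<exists>z. x @ z = y"
  proof (induction x arbitrary: y)
    case Nil
    then show ?case by simp
  next
    case (Cons b s)
    from Cons.prems obtain y' where "y = b # y'" and "tle (unary y') (unary s)"
      by (rule tle_unary_Cons)
    with Cons.IH show ?case by auto
  qed
qed

lemma inj_unary: "inj unary"
proof (rule injI)
  fix x y
  assume "unary x = unary y"
  then have "tle (unary y) (unary x)" and "tle (unary x) (unary y)"
    using tle_unary_append[of _ "[]"] by simp_all
  then show "x = y"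
    unfolding prefix_iff_tle_unary[symmetric] by auto
qed

theorem lemma3:
  shows "bij_betw g UNIV UU \<and>
         (\<forall>x y. (\<exists>z. x @ z = y) \<longleftrightarrow> tle (g y) (g x))"
proof -
  have g_unary: "g = unary"
    by (rule ext, rule g_eq_unary)
  show ?thesis
    unfolding g_unary bij_betw_def UU_eq_range_unary
    using inj_unary prefix_iff_tle_unary by simp
qed

end
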